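(* Let $T:\mathbb{Z}_{\ge 0}\times\mathbb{Z}_{\ge 0}\to\mathbb{R}$ be the function defined by $T(n,0)=0$ for all $n\ge 0$, $T(0,q)=0$ for all $q\ge 0$, and, for all $n\ge 1$ and $q\ge 1$, $$T(n,q) \;=\; n+\frac{2}{n(q+1)}\sum_{j=0}^{n-1}\sum_{k=0}^{q} T(j,k).$$ Then for all integers $n\ge 0$ and $q\ge 1$, $$T(n,q)\;\le\; 2nH_q \;=\; O(n\log q),$$ where $H_q=\sum_{i=1}^{q} 1/i$ is the $q$-th harmonic number.
   Context: The recurrence models the average number of item comparisons needed to answer $q$ distinct selection queries (queries asking for the item of rank $k$) online on an initially unsorted array of $n$ distinct items, averaged over all input permutations (with the $q$ queries equally likely to split over the pivot in any of the $q+1$ ways), using Hoare's quickselect restricted to the unsorted subinterval containing the queried rank, with the pivot always chosen as the last item of the current subinterval and with all previously placed pivots remembered (so work already done by earlier queries is reused). The harmonic numbers satisfy $H_0=0$. *)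

theory Defs
  imports "HOL-Analysis.Analysis"
begin

function T :: "nat \<Rightarrow> nat \<Rightarrow> real" where
  "T n q = (if n = 0 \<or> q = 0 then 0
            else real n + 2 / (real n * real (q + 1)) *
                 (\<Sum>j<n. \<Sum>k\<le>q. T j k))"
  by auto
termination
  by (relation "Wellfounded.measure fst") auto

end

theory Submission
  imports Defs
begin

(* We show the bound T n q \<le> 2 n H_q for ALL n and q (for q = 0 both
   sides vanish) by strong induction on n.  For n, q \<ge> 1 the recurrence expresses
   T n q through the values T j k with j < n, which the induction hypothesis bounds
   by 2 j H_k.  The resulting double sum of bounds factors into two closed forms,
     \<Sum>_{j<n} 2j = n(n-1)   and   \<Sum>_{k\<le>q} H_k = (q+1) H_{q+1} - (q+1),
   so the recurrence yields T n q \<le> n + 2(n-1)(H_{q+1} - 1).  Since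
   H_{q+1} = H_q + 1/(q+1) \<le> H_q + 1/2 and H_q \<ge> 1, this is at most 2 n H_q. *)

lemma sum_harm: "(\<Sum>k\<le>q. harm k :: real) = real (q + 1) * harm (q + 1) - real (q + 1)"
proof (induction q)
  case 0
  then show ?case by (simp add: harm_def)
next
  case (Suc q)
  have "harm (Suc q + 1) = (harm (Suc q) :: real) + inverse (real (Suc q + 1))"
    using harm_Suc[of "Suc q"] by simp
  then show ?case using Suc by (simp add: field_simps)
qed

lemma sum_twice_below: "(\<Sum>j<n. 2 * real j) = real n * (real n - 1)"
  by (induction n) (auto simp: algebra_simps)

lemma T_rec:
  assumes "n \<ge> 1" and "q \<ge> 1"
  shows "T n q = real n + 2 / (real n * real (q + 1)) * (\<Sum>j<n. \<Sum>k\<le>q. T j k)"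
  using assms by simp

lemma sum_of_bounds:
  "(\<Sum>j<n. \<Sum>k\<le>q. 2 * real j * harm k) = real n * (real n - 1) * (real (q + 1) * (harm (q + 1) - 1))"
proof -
  have "(\<Sum>j<n. \<Sum>k\<le>q. 2 * real j * harm k) = (\<Sum>j<n. 2 * real j) * (\<Sum>k\<le>q. harm k)"
    by (simp add: sum_product)
  then show ?thesis by (simp add: sum_twice_below sum_harm right_diff_distrib)
qed

lemma recurrence_step_bound:
  assumes n: "n \<ge> 1" and q: "q \<ge> 1"
  shows "real n + 2 / (real n * real (q + 1)) * (real n * (real n - 1) * (real (q + 1) * (harm (q + 1) - 1)))
         \<le> 2 * real n * harm q"
proof -
  have harm_Suc_q: "harm (q + 1) = (harm q :: real) + 1 / real (q + 1)"
    using harm_Suc[of q] by (simp add: inverse_eq_divide)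
  have harm_ge_1: "harm q \<ge> (1::real)"
    using harm_mono[OF q] by (simp add: harm_def)
  have small: "(real n - 1) / real (q + 1) \<le> (real n - 1) / 2"
    using n q by (intro divide_left_mono) auto
  have "2 / (real n * real (q + 1)) * (real n * (real n - 1) * (real (q + 1) * (harm (q + 1) - 1)))
        = 2 * (real n - 1) * (harm (q + 1) - 1)"
    using n by (simp add: field_simps del: of_nat_Suc)
  also have "\<dots> = 2 * (real n - 1) * harm q + 2 * ((real n - 1) / real (q + 1)) - 2 * (real n - 1)"
    unfolding harm_Suc_q by (simp add: field_simps)
  finally have "2 / (real n * real (q + 1)) * (real n * (real n - 1) * (real (q + 1) * (harm (q + 1) - 1)))
        = 2 * (real n - 1) * harm q + 2 * ((real n - 1) / real (q + 1)) - 2 * (real n - 1)" .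
  then show ?thesis
    using small harm_ge_1 n by (simp add: algebra_simps)
qed

theorem T_le_twice_n_harm: "T n q \<le> 2 * real n * harm q"
proof (induction n arbitrary: q rule: less_induct)
  case (less n)
  show ?case
  proof (cases "n = 0 \<or> q = 0")
    case True
    then show ?thesis by (auto simp: harm_def)
  next
    case False
    then have n: "n \<ge> 1" and q: "q \<ge> 1" by auto
    have "(\<Sum>j<n. \<Sum>k\<le>q. T j k) \<le> (\<Sum>j<n. \<Sum>k\<le>q. 2 * real j * harm k)"
      using less by (intro sum_mono) auto
    then have "2 / (real n * real (q + 1)) * (\<Sum>j<n. \<Sum>k\<le>q. T j k)
               \<le> 2 / (real n * real (q + 1))
                 * (real n * (real n - 1) * (real (q + 1) * (harm (q + 1) - 1)))"
      unfolding sum_of_bounds by (rule mult_left_mono) simp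
    then have "T n q \<le> real n + 2 / (real n * real (q + 1))
                 * (real n * (real n - 1) * (real (q + 1) * (harm (q + 1) - 1)))"
      unfolding T_rec[OF n q] by linarith
    also have "\<dots> \<le> 2 * real n * harm q"
      using recurrence_step_bound[OF n q] .
    finally show ?thesis .
  qed
qed

theorem mainTheorem1:
  fixes n q :: nat
  assumes "q \<ge> 1"
  shows "T n q \<le> 2 * real n * harm q"
  by (rule T_le_twice_n_harm)

end
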